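(* Let $y$ be a Lyndon word with $|y|>1$, written as $y=x^kzb$ where $x$ is a Lyndon word, $k\ge 1$, $|x|$ is the smallest period of $x^kz$, $z$ is a proper prefix of $x$ (possibly empty), $a$ is the letter such that $za$ is a prefix of $x$, and $b$ is a letter with $a<b$. Let $1\le e\le k$ and let $u,v$ be non-empty proper prefixes of $x$ such that $x^eu$ and $x^ev$ are proper prefixes of $y$. If $u\prec v$, then $x^eu\prec x^ev$.
   Context: Lexicographic order $<$ on finite and infinite words: $u<v$ if $u$ is a proper prefix of $v$, or $u=ras$, $v=rbt$ with letters $a<b$. A Lyndon word is a non-empty word strictly smaller than each of its proper non-empty suffixes. Infinite ordering: for non-empty words $u,v$, $u\prec v$ iff $u^\infty<v^\infty$, or $u^\infty=v^\infty$ and $|u|>|v|$, where $u^\infty=uuu\cdots$. A period of a word $w$ is an integer $p\ge1$ with $w[i]=w[i+p]$ whenever both are defined. *)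

theory Defs
  imports Main "HOL-Library.Sublist"
begin

definition lex_less :: "'a::linorder list \<Rightarrow> 'a list \<Rightarrow> bool" where
  "lex_less u v \<longleftrightarrow> strict_prefix u v \<or>
     (\<exists>r a b s t. u = r @ a # s \<and> v = r @ b # t \<and> a < b)"

definition inf_lex_less :: "(nat \<Rightarrow> 'a::linorder) \<Rightarrow> (nat \<Rightarrow> 'a) \<Rightarrow> bool" where
  "inf_lex_less f g \<longleftrightarrow> (\<exists>n. (\<forall>i<n. f i = g i) \<and> f n < g n)"

definition pow_inf :: "'a list \<Rightarrow> nat \<Rightarrow> 'a" where
  "pow_inf u = (\<lambda>i. u ! (i mod length u))"

definition inf_prec :: "'a::linorder list \<Rightarrow> 'a list \<Rightarrow> bool" where
  "inf_prec u v \<longleftrightarrow> inf_lex_less (pow_inf u) (pow_inf v) \<or>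
     (pow_inf u = pow_inf v \<and> length u > length v)"

definition lyndon :: "'a::linorder list \<Rightarrow> bool" where
  "lyndon w \<longleftrightarrow> w \<noteq> [] \<and> (\<forall>i. 0 < i \<and> i < length w \<longrightarrow> lex_less w (drop i w))"

definition is_period :: "'a list \<Rightarrow> nat \<Rightarrow> bool" where
  "is_period w p \<longleftrightarrow> p \<ge> 1 \<and> (\<forall>i. i + p < length w \<longrightarrow> w ! i = w ! (i + p))"

definition smallest_period :: "'a list \<Rightarrow> nat" where
  "smallest_period w = (LEAST p. is_period w p)"

definition wpow :: "'a list \<Rightarrow> nat \<Rightarrow> 'a list" where
  "wpow x k = concat (replicate k x)"

end

theory Submission
  imports Defs "HOL-Library.List_Lexorder"
begin

(* For non-empty words, s \<prec> t holds iff st < ts, or st = ts and |s| > |t|: the words s^\<infinity> and t^\<infinity>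
   agree iff s and t commute, and otherwise they are ordered like the equal-length words
   s^|t| t^|s| and t^|s| s^|t|.  So it suffices to show (Xu)(Xv) < (Xv)(Xu) for X = x^e.
   The prefixes u and v of x are comparable; after cancelling the common prefix Xu or Xv this
   becomes a comparison of uv with vu inside a word long enough to decide it, except when
   u = vw with vw = wv, where the Lyndon property x < s for x = ws decides instead. *)

lemma lex_less_iff_less: "lex_less u v \<longleftrightarrow> u < v"
proof -
  have "strict_prefix u v \<longleftrightarrow> (\<exists>c w. v = u @ c # w)"
    by (metis append_Cons append_Nil2 neq_Nil_conv prefix_def strict_prefix_def self_append_conv)
  then show ?thesis
    unfolding lex_less_def list_less_def lexord_def by blast
qed

lemma append_less_append_left_iff: "(w::'a::linorder list) @ s < w @ t \<longleftrightarrow> s < t"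
  unfolding list_less_def by (simp add: lexord_same_pref_iff)

lemma append_less_append_of_length_le:
  "(s::'a::linorder list) < t \<Longrightarrow> length t \<le> length s \<Longrightarrow> s @ s' < t @ t'"
  unfolding list_less_def by (rule lexord_sufI)

lemma lyndon_less_suffix:
  assumes "lyndon x" "x = w @ s" "w \<noteq> []" "s \<noteq> []"
  shows "x < s"
proof -
  have "0 < length w" "length w < length x"
    using assms(2-4) by auto
  then have "lex_less x (drop (length w) x)"
    using assms(1) unfolding lyndon_def by blast
  then show ?thesis
    using assms(2) by (simp add: lex_less_iff_less)
qed

lemma wpow_0 [simp]: "wpow s 0 = []"
  by (simp add: wpow_def)

lemma wpow_Suc: "wpow s (Suc m) = s @ wpow s m"
  by (simp add: wpow_def)

lemma length_wpow: "length (wpow s m) = m * length s"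
  by (induction m) (simp_all add: wpow_Suc)

lemma nth_wpow: "i < m * length s \<Longrightarrow> wpow s m ! i = s ! (i mod length s)"
proof (induction m arbitrary: i)
  case (Suc m)
  then show ?case
    by (cases "i < length s") (auto simp: wpow_Suc nth_append le_mod_geq)
qed simp

lemma prefix_wpow: "1 \<le> m \<Longrightarrow> prefix s (wpow s m)"
  by (cases m) (simp_all add: wpow_Suc)

lemma pow_inf_nth: "i < length s \<Longrightarrow> pow_inf s i = s ! i"
  by (simp add: pow_inf_def)

lemma pow_inf_wpow:
  assumes "0 < m" "s \<noteq> []"
  shows "pow_inf (wpow s m) = pow_inf s"
proof
  fix i
  have "i mod (m * length s) < m * length s"
    using assms by simp
  then show "pow_inf (wpow s m) i = pow_inf s i"
    by (simp add: pow_inf_def length_wpow nth_wpow mod_mod_cancel)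
qed

lemma pow_inf_eq_iff_commute:
  assumes "s \<noteq> []" "t \<noteq> []"
  shows "pow_inf s = pow_inf t \<longleftrightarrow> s @ t = t @ s"
proof
  assume eq: "pow_inf s = pow_inf t"
  have nth_append_eq: "(p @ q) ! i = pow_inf p i"
    if "pow_inf p = pow_inf q" "i < length (p @ q)" for p q :: "'a list" and i
  proof (cases "i < length p")
    case True
    then show ?thesis
      by (simp add: nth_append pow_inf_nth)
  next
    case False
    then have "(p @ q) ! i = pow_inf q (i - length p)"
      using that(2) by (simp add: nth_append pow_inf_nth)
    also have "\<dots> = pow_inf p (i - length p)"
      using that(1) by simp
    also have "\<dots> = pow_inf p i"
      using False by (simp add: pow_inf_def le_mod_geq)
    finally show ?thesis .
  qed
  show "s @ t = t @ s"
    using nth_append_eq[of s t] nth_append_eq[of t s] eq by (intro nth_equalityI) auto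
next
  assume "s @ t = t @ s"
  then obtain m n r where "wpow r m = s" "wpow r n = t"
    unfolding wpow_def using comm_append_are_replicate by blast
  moreover have "0 < m" "0 < n" "r \<noteq> []"
    using calculation assms length_wpow[of r m] by (auto intro!: gr0I)
  ultimately show "pow_inf s = pow_inf t"
    using pow_inf_wpow[of _ r] by metis
qed

lemma wpow_append_less_append_wpow:
  "(s::'a::linorder list) @ t < t @ s \<Longrightarrow> 1 \<le> n \<Longrightarrow> wpow s n @ t < t @ wpow s n"
proof (induction n)
  case (Suc n)
  show ?case
  proof (cases "n = 0")
    case False
    have "wpow s (Suc n) @ t = s @ (wpow s n @ t)"
      by (simp add: wpow_Suc)
    also have "\<dots> < s @ (t @ wpow s n)"
      using Suc False by (simp add: append_less_append_left_iff)
    also have "\<dots> < (t @ s) @ wpow s n"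
      using append_less_append_of_length_le[OF Suc.prems(1)] by simp
    finally show ?thesis
      by (simp add: wpow_Suc)
  qed (use Suc.prems in \<open>simp add: wpow_Suc\<close>)
qed simp

lemma append_wpow_less_wpow_append:
  "(s::'a::linorder list) @ t < t @ s \<Longrightarrow> 1 \<le> n \<Longrightarrow> s @ wpow t n < wpow t n @ s"
proof (induction n)
  case (Suc n)
  show ?case
  proof (cases "n = 0")
    case False
    have "s @ wpow t (Suc n) = (s @ t) @ wpow t n"
      by (simp add: wpow_Suc)
    also have "\<dots> < t @ (s @ wpow t n)"
      using append_less_append_of_length_le[OF Suc.prems(1)] by simp
    also have "\<dots> < t @ (wpow t n @ s)"
      using Suc False by (simp add: append_less_append_left_iff)
    finally show ?thesis
      by (simp add: wpow_Suc)
  qed (use Suc.prems in \<open>simp add: wpow_Suc\<close>)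
qed simp

lemma inf_lex_less_pow_inf_if_append_less:
  assumes "s \<noteq> []" "t \<noteq> []" "(s::'a::linorder list) @ t < t @ s"
  shows "inf_lex_less (pow_inf s) (pow_inf t)"
proof -
  define S where "S = wpow s (length t)"
  define T where "T = wpow t (length s)"
  have len: "length S = length T"
    unfolding S_def T_def by (simp add: length_wpow)
  have "S @ t < t @ S"
    unfolding S_def using assms by (intro wpow_append_less_append_wpow) (auto simp: Suc_le_eq)
  then have ST: "S @ T < T @ S"
    unfolding T_def using assms by (intro append_wpow_less_wpow_append) (auto simp: Suc_le_eq)
  have "S < T"
  proof (rule ccontr)
    assume "\<not> S < T"
    then have "T @ S < S @ T \<or> T = S"
      using len append_less_append_of_length_le[of T S S T] by auto
    then show False
      using ST by auto
  qed
  then obtain r c d S' T' where cd: "c < d" "S = r @ c # S'" "T = r @ d # T'"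
    using len unfolding list_less_def lexord_def by auto
  have "pow_inf S = pow_inf s" "pow_inf T = pow_inf t"
    unfolding S_def T_def using assms by (simp_all add: pow_inf_wpow)
  then have nth: "pow_inf s i = S ! i" "pow_inf t i = T ! i" if "i < length S" for i
    using that len pow_inf_nth[of i S] pow_inf_nth[of i T] by simp_all
  show ?thesis
    unfolding inf_lex_less_def
  proof (intro exI[of _ "length r"] conjI allI impI)
    fix i
    assume "i < length r"
    then show "pow_inf s i = pow_inf t i"
      using cd nth[of i] by (simp add: nth_append)
  next
    show "pow_inf s (length r) < pow_inf t (length r)"
      using cd nth[of "length r"] by simp
  qed
qed

lemma inf_lex_less_asym: "inf_lex_less f g \<Longrightarrow> \<not> inf_lex_less g f"
  unfolding inf_lex_less_def by (metis less_asym linorder_neqE_nat)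

lemma inf_prec_iff_append_less:
  assumes "s \<noteq> []" "t \<noteq> []"
  shows "inf_prec s (t::'a::linorder list) \<longleftrightarrow>
    s @ t < t @ s \<or> (s @ t = t @ s \<and> length t < length s)"
proof -
  have "inf_lex_less (pow_inf s) (pow_inf t) \<longleftrightarrow> s @ t < t @ s"
  proof
    assume less: "inf_lex_less (pow_inf s) (pow_inf t)"
    then have "s @ t \<noteq> t @ s"
      using pow_inf_eq_iff_commute[OF assms] by (auto simp: inf_lex_less_def)
    moreover have "\<not> t @ s < s @ t"
      using assms less inf_lex_less_pow_inf_if_append_less[of t s] inf_lex_less_asym by blast
    ultimately show "s @ t < t @ s"
      by auto
  qed (rule inf_lex_less_pow_inf_if_append_less[OF assms])
  then show ?thesis
    unfolding inf_prec_def using pow_inf_eq_iff_commute[OF assms] by auto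
qed

lemma append_less_append_if_prefix:
  assumes "prefix v x" "prefix x X" "v = u @ w" "inf_prec u v" "u \<noteq> []"
  shows "(X @ u) @ (X @ v) < (X @ v) @ (X @ u)"
proof -
  have "u @ w < w @ u"
    using assms inf_prec_iff_append_less[of u v] append_less_append_left_iff[of u]
    by auto
  moreover have "prefix v X" "prefix u X"
    using assms(1-3) prefix_order.trans[of u v] by auto
  then obtain r r' where "X = v @ r" "X = u @ r'"
    unfolding prefix_def by blast
  ultimately have "X @ u @ w < w @ X @ u"
    using assms(3) append_less_append_of_length_le[of "u @ w" "w @ u" "r @ u @ w" "r' @ u"]
    by simp
  then show ?thesis
    using assms(3) by (simp add: append_less_append_left_iff)
qed

lemma append_less_append_if_prefix_lyndon:
  assumes "lyndon x" "prefix u x" "prefix x X" "u = v @ w" "inf_prec u v" "v \<noteq> []"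
  shows "(X @ u) @ (X @ v) < (X @ v) @ (X @ u)"
proof -
  have "w \<noteq> []"
    using assms inf_prec_iff_append_less[of u v] by auto
  have "v @ w @ v < v @ v @ w \<or> (v @ w @ v = v @ v @ w)"
    using assms inf_prec_iff_append_less[of u v] by auto
  then have wv: "w @ v < v @ w \<or> w @ v = v @ w"
    using append_less_append_left_iff[of v] by auto
  have "w @ X @ v < X @ v @ w"
  proof (cases "w @ v = v @ w")
    case True
    have "prefix w x"
      using assms(2,4) True by (metis prefix_def prefix_order.trans)
    then obtain s X' where x: "x = w @ s" and X: "X = x @ X'"
      using assms(3) by (auto simp: prefix_def)
    have "s \<noteq> []"
      using assms(2,4,6) x by (auto dest: prefix_length_le)
    then have "x < s"
      using lyndon_less_suffix[OF assms(1) x \<open>w \<noteq> []\<close>] by simp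
    then have "x @ X' @ v < s @ X' @ w @ v"
      using x by (intro append_less_append_of_length_le) simp_all
    then have "w @ X @ v < w @ s @ X' @ w @ v"
      using X by (simp only: append_less_append_left_iff append.assoc)
    also have "\<dots> = X @ v @ w"
      using True x X by simp
    finally show ?thesis .
  next
    case False
    have "prefix u X"
      using assms(2,3) by (rule prefix_order.trans)
    then have "prefix v X"
      using assms(4) prefix_order.trans[of v u X] by simp
    then obtain r r' where r: "X = v @ r" and r': "X = (v @ w) @ r'"
      using \<open>prefix u X\<close> assms(4) unfolding prefix_def by blast
    have "w @ X @ v = (w @ v) @ r @ v"
      using r by simp
    also have "\<dots> < (v @ w) @ r' @ v @ w"
      using False wv by (intro append_less_append_of_length_le[of "w @ v" "v @ w"]) auto
    also have "\<dots> = X @ v @ w"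
      using r' by simp
    finally show ?thesis .
  qed
  then show ?thesis
    using assms(4) by (simp add: append_less_append_left_iff)
qed

lemma inf_prec_prepend_lyndon_prefix:
  assumes "lyndon x" "prefix x X" "prefix u x" "prefix v x" "u \<noteq> []" "v \<noteq> []"
    and "inf_prec u v"
  shows "inf_prec (X @ u) (X @ v)"
proof -
  have "(X @ u) @ (X @ v) < (X @ v) @ (X @ u)"
  proof (cases "prefix u v")
    case True
    then show ?thesis
      using assms append_less_append_if_prefix by (metis prefix_def)
  next
    case False
    then have "prefix v u"
      using assms prefix_same_cases by blast
    then show ?thesis
      using assms append_less_append_if_prefix_lyndon by (metis prefix_def)
  qed
  then show ?thesis
    using assms inf_prec_iff_append_less[of "X @ u" "X @ v"] by simp
qed

theorem mainTheorem4:
  fixes x y z u v :: "'a::linorder list" and a b :: 'a and k e :: nat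
  assumes "lyndon y" and "length y > 1"
    and "y = wpow x k @ z @ [b]"
    and "lyndon x" and "k \<ge> 1"
    and "length x = smallest_period (wpow x k @ z)"
    and "strict_prefix z x"
    and "prefix (z @ [a]) x"
    and "a < b"
    and "1 \<le> e" and "e \<le> k"
    and "u \<noteq> []" and "strict_prefix u x"
    and "v \<noteq> []" and "strict_prefix v x"
    and "strict_prefix (wpow x e @ u) y"
    and "strict_prefix (wpow x e @ v) y"
    and "inf_prec u v"
  shows "inf_prec (wpow x e @ u) (wpow x e @ v)"
  using assms(4,12-15,18) prefix_wpow[OF assms(10)]
  by (intro inf_prec_prepend_lyndon_prefix) (auto simp: strict_prefix_def)

end
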